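(* Let $T$ be a self-affine lattice tile with neighbor graph $G=(V,E)$, and let $u,v\in V\setminus\{0\}$ with $u\succ v$. Then $\dim B_u\ge\dim B_v$, where $\dim$ denotes any of topological dimension, Hausdorff dimension, or (upper/lower) box dimension. Moreover, if $B_v$ is a face of $T$, then $B_u$ is a face of $T$.
   Context: Setting: $M$ is an $n\times n$ integer matrix all of whose eigenvalues have modulus $>1$, $m=|\det M|$, $k_1,\dots,k_m\in\mathbb R^n$ with $k_j-k_1\in\mathbb Z^n$ forming a complete set of residues of $\mathbb Z^n$ modulo $M\mathbb Z^n$; $f_j(x)=M^{-1}(x+k_j)$, $T=\bigcup_j f_j(T)$ compact nonempty. $B_k=T\cap(T+k)$. Neighbor graph $G=(V,E)$: $V=\{k\in\mathbb Z^n:B_k\ne\emptyset\}$; for $k,k'\in V$, an edge from $k$ to $k'$ with label $i$ iff $k'=Mk+k_j-k_i$ for some $j$. For vertices $u,v$ write $u\succ v$ if there is a directed path in $G$ from $u$ to $v$. $B_k$ ($k\ne0$) is a face of $T$ if there are $x\in B_k$ and an open neighborhood $U$ of $x$ with $U\cap\partial T\subseteq B_k$ and $U\subseteq T\cup(T+k)$. *)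

theory Defs
  imports "HOL-Analysis.Analysis" "HOL-Library.Liminf_Limsup"
begin

definition Zn :: "(real^'n) set" where
  "Zn = {x. \<forall>i. x $ i \<in> \<int>}"

definition int_matrix :: "real^'n^'n \<Rightarrow> bool" where
  "int_matrix M \<longleftrightarrow> (\<forall>i j. M $ i $ j \<in> \<int>)"

definition cmat :: "real^'n^'n \<Rightarrow> complex^'n^'n" where
  "cmat M = (\<chi> i j. complex_of_real (M $ i $ j))"

definition expanding :: "real^'n^'n \<Rightarrow> bool" where
  "expanding M \<longleftrightarrow>
     (\<forall>(lam::complex) (w::complex^'n). w \<noteq> 0 \<and> cmat M *v w = lam *s w \<longrightarrow> cmod lam > 1)"

definition complete_residues :: "real^'n^'n \<Rightarrow> nat \<Rightarrow> (nat \<Rightarrow> real^'n) \<Rightarrow> bool" where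
  "complete_residues M m k \<longleftrightarrow>
     (\<forall>j<m. k j - k 0 \<in> Zn) \<and>
     (\<forall>z\<in>Zn. \<exists>!j. j < m \<and> z - (k j - k 0) \<in> (\<lambda>w. M *v w) ` Zn)"

definition translate :: "(real^'n) set \<Rightarrow> real^'n \<Rightarrow> (real^'n) set" where
  "translate T k = (\<lambda>x. x + k) ` T"

definition Bset :: "(real^'n) set \<Rightarrow> real^'n \<Rightarrow> (real^'n) set" where
  "Bset T k = T \<inter> translate T k"

definition lattice_tiling :: "(real^'n) set \<Rightarrow> bool" where
  "lattice_tiling T \<longleftrightarrow>
     (\<Union>k\<in>Zn. translate T k) = UNIV \<and>
     (\<forall>k\<in>Zn. k \<noteq> 0 \<longrightarrow> interior T \<inter> interior (translate T k) = {})"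

definition self_affine_lattice_tile ::
  "real^'n^'n \<Rightarrow> nat \<Rightarrow> (nat \<Rightarrow> real^'n) \<Rightarrow> (real^'n) set \<Rightarrow> bool" where
  "self_affine_lattice_tile M m k T \<longleftrightarrow>
     int_matrix M \<and> expanding M \<and> m = nat \<bar>\<lfloor>det M\<rfloor>\<bar> \<and> complete_residues M m k \<and>
     compact T \<and> T \<noteq> {} \<and>
     T = (\<Union>j<m. (\<lambda>x. matrix_inv M *v (x + k j)) ` T) \<and>
     lattice_tiling T"

definition nb_vertices :: "(real^'n) set \<Rightarrow> (real^'n) set" where
  "nb_vertices T = {k \<in> Zn. Bset T k \<noteq> {}}"

definition nb_edges ::
  "real^'n^'n \<Rightarrow> nat \<Rightarrow> (nat \<Rightarrow> real^'n) \<Rightarrow> (real^'n) set \<Rightarrow> ((real^'n) \<times> (real^'n)) set" where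
  "nb_edges M m k T =
     {(a, b). a \<in> nb_vertices T \<and> b \<in> nb_vertices T \<and>
              (\<exists>i<m. \<exists>j<m. b = M *v a + k j - k i)}"

definition nb_succ ::
  "real^'n^'n \<Rightarrow> nat \<Rightarrow> (nat \<Rightarrow> real^'n) \<Rightarrow> (real^'n) set \<Rightarrow> real^'n \<Rightarrow> real^'n \<Rightarrow> bool" where
  "nb_succ M m k T u v \<longleftrightarrow> (u, v) \<in> (nb_edges M m k T)\<^sup>*"

definition is_face :: "(real^'n) set \<Rightarrow> real^'n \<Rightarrow> bool" where
  "is_face T k \<longleftrightarrow> k \<noteq> 0 \<and>
     (\<exists>x\<in>Bset T k. \<exists>U. open U \<and> x \<in> U \<and> U \<inter> frontier T \<subseteq> Bset T k \<and>
                       U \<subseteq> T \<union> translate T k)"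

definition hausdorff_pre :: "real \<Rightarrow> real \<Rightarrow> 'a::metric_space set \<Rightarrow> ennreal" where
  "hausdorff_pre s \<delta> A =
     (INF U \<in> {U :: nat \<Rightarrow> 'a set. A \<subseteq> (\<Union>i. U i) \<and> (\<forall>i. bounded (U i) \<and> diameter (U i) \<le> \<delta>)}.
        (\<Sum>i. ennreal (diameter (U i) powr s)))"

definition hausdorff_measure :: "real \<Rightarrow> 'a::metric_space set \<Rightarrow> ennreal" where
  "hausdorff_measure s A = (SUP \<delta> \<in> {0<..}. hausdorff_pre s \<delta> A)"

definition hausdorff_dim :: "'a::metric_space set \<Rightarrow> ereal" where
  "hausdorff_dim A = Inf {ereal s | s. s \<ge> 0 \<and> hausdorff_measure s A = 0}"

definition cover_number :: "real \<Rightarrow> 'a::metric_space set \<Rightarrow> nat" where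
  "cover_number \<delta> A =
     Inf {card F | F. finite F \<and> A \<subseteq> \<Union>F \<and> (\<forall>U\<in>F. bounded U \<and> diameter U \<le> \<delta>)}"

definition upper_box_dim :: "'a::metric_space set \<Rightarrow> ereal" where
  "upper_box_dim A = Limsup (at_right 0) (\<lambda>\<delta>. ereal (ln (real (cover_number \<delta> A)) / - ln \<delta>))"

definition lower_box_dim :: "'a::metric_space set \<Rightarrow> ereal" where
  "lower_box_dim A = Liminf (at_right 0) (\<lambda>\<delta>. ereal (ln (real (cover_number \<delta> A)) / - ln \<delta>))"

definition covdim_le :: "'a::topological_space set \<Rightarrow> int \<Rightarrow> bool" where
  "covdim_le S n \<longleftrightarrow>
     (\<forall>\<U>. finite \<U> \<and> (\<forall>U\<in>\<U>. openin (top_of_set S) U) \<and> S \<subseteq> \<Union>\<U> \<longrightarrow>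
        (\<exists>\<V>. finite \<V> \<and> (\<forall>V\<in>\<V>. openin (top_of_set S) V) \<and> S \<subseteq> \<Union>\<V> \<and>
             (\<forall>V\<in>\<V>. \<exists>U\<in>\<U>. V \<subseteq> U) \<and>
             (\<forall>x\<in>S. card {V\<in>\<V>. x \<in> V} \<le> nat (n + 1))))"

definition topological_dim :: "'a::topological_space set \<Rightarrow> ereal" where
  "topological_dim S = Inf {ereal (real_of_int n) | n. n \<ge> -1 \<and> covdim_le S n}"

end

theory Submission
  imports Defs
begin

text \<open>
  An edge \<open>a \<rightarrow> b\<close> of the neighbor graph, \<open>b = M a + k\<^sub>j - k\<^sub>i\<close>, comes with
  the contraction \<open>f\<^sub>i\<close> of the IFS, which maps \<open>T\<close> into \<open>T\<close> and \<open>T + b\<close> into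
  \<open>f\<^sub>j(T) + a \<subseteq> T + a\<close>.  Composing along a path \<open>u \<succ> v\<close> gives an invertible affine map
  \<open>g\<close> with \<open>g(T) \<subseteq> T\<close> and \<open>g(T + v) \<subseteq> T + u\<close>, hence \<open>g(B\<^sub>v) \<subseteq> B\<^sub>u\<close>.  Everything then
  follows from general facts:
  \<^item> \<open>g\<close> is a topological embedding of the compact set \<open>B\<^sub>v\<close> into \<open>B\<^sub>u\<close>, and covering
    dimension is monotone under such embeddings (closed subspaces, homeomorphisms);
  \<^item> \<open>B\<^sub>v \<subseteq> g\<^sup>-\<^sup>1(B\<^sub>u)\<close> with \<open>g\<^sup>-\<^sup>1\<close> Lipschitz, and Lipschitz images do not increase Hausdorff
    or (upper/lower) box dimension;
  \<^item> \<open>g\<close> is an open map preserving \<open>T\<close>, so it carries a face witness of \<open>B\<^sub>v\<close> to one of \<open>B\<^sub>u\<close>.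
\<close>

section \<open>Invertible affine maps of \<open>\<real>\<^sup>n\<close>\<close>

definition invertible_affine :: "(real^'n \<Rightarrow> real^'n) \<Rightarrow> bool" where
  "invertible_affine g \<longleftrightarrow> (\<exists>A c. invertible A \<and> g = (\<lambda>x. A *v x + c))"

lemma matrix_inv_inverse:
  assumes "invertible (A::real^'n^'n)"
  shows "matrix_inv A ** A = mat 1" "A ** matrix_inv A = mat 1"
proof -
  have "\<exists>A'. A ** A' = mat 1 \<and> A' ** A = mat 1" using assms by (simp add: invertible_def)
  hence "A ** matrix_inv A = mat 1 \<and> matrix_inv A ** A = mat 1"
    unfolding matrix_inv_def by (rule someI_ex)
  thus "matrix_inv A ** A = mat 1" "A ** matrix_inv A = mat 1" by auto
qed

lemma invertible_affine_id: "invertible_affine id"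
  unfolding invertible_affine_def
  by (intro exI[of _ "mat 1"] exI[of _ 0]) (auto simp: invertible_def)

lemma invertible_affine_comp:
  assumes "invertible_affine g" "invertible_affine f"
  shows "invertible_affine (g \<circ> f)"
proof -
  obtain A c B d where A: "invertible A" "g = (\<lambda>x. A *v x + c)"
    and B: "invertible B" "f = (\<lambda>x. B *v x + d)"
    using assms unfolding invertible_affine_def by blast
  have "g \<circ> f = (\<lambda>x. (A ** B) *v x + (A *v d + c))"
    using A B by (auto simp: fun_eq_iff matrix_vector_mul_assoc matrix_vector_right_distrib)
  thus ?thesis using invertible_mult[OF A(1) B(1)] unfolding invertible_affine_def by blast
qed

lemma invertible_affine_inverse:
  assumes "invertible_affine g"
  obtains h where "invertible_affine h" "\<And>x. h (g x) = x" "\<And>y. g (h y) = y"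
proof -
  obtain A c where A: "invertible A" "g = (\<lambda>x. A *v x + c)"
    using assms unfolding invertible_affine_def by blast
  note inv = matrix_inv_inverse[OF A(1)]
  define h where "h = (\<lambda>y. matrix_inv A *v y + (- (matrix_inv A *v c)))"
  have "invertible (matrix_inv A)" using inv unfolding invertible_def by blast
  hence "invertible_affine h" unfolding invertible_affine_def h_def by blast
  moreover have "h (g x) = x" for x
    using inv by (simp add: h_def A(2) matrix_vector_mul_assoc matrix_vector_right_distrib)
  moreover have "g (h y) = y" for y
    using inv by (simp add: h_def A(2) matrix_vector_mul_assoc matrix_vector_right_distrib
        matrix_vector_mult_diff_distrib)
  ultimately show ?thesis by (rule that)
qed

lemma invertible_affine_lipschitz:
  assumes "invertible_affine g"
  obtains C where "C-lipschitz_on UNIV g"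
proof -
  obtain A c where g: "g = (\<lambda>x. A *v x + c)"
    using assms unfolding invertible_affine_def by blast
  obtain C where "C-lipschitz_on UNIV (\<lambda>x. A *v x)"
    using bounded_linear.lipschitz_boundE[OF matrix_vector_mul_bounded_linear] by blast
  hence "C-lipschitz_on UNIV g"
    unfolding g lipschitz_on_def by (simp add: dist_add_cancel2)
  thus ?thesis by (rule that)
qed

lemma invertible_affine_continuous:
  assumes "invertible_affine g"
  shows "continuous_on S g"
proof -
  obtain A c where g: "g = (\<lambda>x. A *v x + c)"
    using assms unfolding invertible_affine_def by blast
  show ?thesis unfolding g
    by (intro continuous_on_add continuous_on_const linear_continuous_on
        matrix_vector_mul_bounded_linear)
qed

text \<open>Invertible affine maps are open maps, their inverse being continuous.\<close>
lemma invertible_affine_open_map: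
  assumes "invertible_affine g" "open U"
  shows "open (g ` U)"
proof -
  obtain h where h: "invertible_affine h" "\<And>x. h (g x) = x" "\<And>y. g (h y) = y"
    using invertible_affine_inverse[OF assms(1)] by blast
  have "g ` U = h -` U"
  proof
    show "g ` U \<subseteq> h -` U" using h(2) by auto
    show "h -` U \<subseteq> g ` U"
    proof
      fix y assume "y \<in> h -` U"
      hence "h y \<in> U" by simp
      with h(3)[of y, symmetric] show "y \<in> g ` U" by (rule image_eqI)
    qed
  qed
  thus ?thesis
    using invertible_affine_continuous[OF h(1), of UNIV] assms(2)
    by (simp add: continuous_on_open_vimage)
qed

section \<open>Neighbor-graph paths as affine contractions of the tile\<close>

text \<open>An expanding matrix has no eigenvalue 0, hence is invertible.\<close>
lemma expanding_invertible:
  assumes "expanding (M::real^'n^'n)"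
  shows "invertible M"
proof (rule ccontr)
  assume "\<not> invertible M"
  then obtain x where x: "M *v x = 0" "x \<noteq> 0"
    using invertible_left_inverse matrix_left_invertible_ker by blast
  define w :: "complex^'n" where "w = (\<chi> i. complex_of_real (x $ i))"
  have "w \<noteq> 0" using x(2) by (auto simp: w_def vec_eq_iff)
  moreover have "cmat M *v w = 0 *s w"
  proof -
    have "(cmat M *v w) $ i = complex_of_real ((M *v x) $ i)" for i
      by (simp add: cmat_def w_def matrix_vector_mult_def)
    thus ?thesis using x(1) by (simp add: vec_eq_iff)
  qed
  ultimately have "cmod 0 > 1" using assms unfolding expanding_def by blast
  thus False by simp
qed

lemma self_affine_lattice_tileD:
  assumes "self_affine_lattice_tile M m k T"
  shows "invertible M" and "compact T" and "T = (\<Union>j<m. (\<lambda>x. matrix_inv M *v (x + k j)) ` T)"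
proof -
  have "expanding M \<and> compact T \<and> T = (\<Union>j<m. (\<lambda>x. matrix_inv M *v (x + k j)) ` T)"
    using assms unfolding self_affine_lattice_tile_def by (elim conjE) (intro conjI)
  thus "invertible M" and "compact T" and "T = (\<Union>j<m. (\<lambda>x. matrix_inv M *v (x + k j)) ` T)"
    using expanding_invertible by blast+
qed

text \<open>An edge \<open>a \<rightarrow> b\<close> with labels \<open>i, j\<close> yields the contraction
  \<open>f = f\<^sub>i\<close>, which maps \<open>T\<close> into \<open>T\<close> and \<open>T + b\<close> onto \<open>f\<^sub>j(T) + a \<subseteq> T + a\<close>.\<close>
lemma edge_affine_map:
  assumes tile: "self_affine_lattice_tile M m k T"
    and e: "(a, b) \<in> nb_edges M m k T"
  obtains f where "invertible_affine f" "f ` T \<subseteq> T" "f ` translate T b \<subseteq> translate T a"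
proof -
  define N where "N = matrix_inv M"
  note inv = matrix_inv_inverse[OF self_affine_lattice_tileD(1)[OF tile], folded N_def]
  note T = self_affine_lattice_tileD(3)[OF tile, folded N_def]
  obtain i j where ij: "i < m" "j < m" "b = M *v a + k j - k i"
    using e unfolding nb_edges_def by blast
  define f where "f = (\<lambda>x. N *v (x + k i))"
  have "invertible N" using inv unfolding invertible_def by blast
  hence "invertible_affine f" unfolding invertible_affine_def f_def
    by (intro exI[of _ N] exI[of _ "N *v k i"]) (simp add: matrix_vector_right_distrib)
  moreover have "f ` T \<subseteq> T" unfolding f_def using ij(1) by (subst (2) T) blast
  moreover have "f ` translate T b \<subseteq> translate T a"
  proof
    fix y assume "y \<in> f ` translate T b"
    then obtain t where t: "t \<in> T" "y = f (t + b)" unfolding translate_def by blast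
    have "y = N *v (t + k j) + N *v (M *v a)"
      using t(2) ij(3) by (simp add: f_def matrix_vector_right_distrib algebra_simps)
    hence "y = N *v (t + k j) + a" using inv by (simp add: matrix_vector_mul_assoc)
    moreover have "N *v (t + k j) \<in> T" using ij(2) t(1) by (subst T) blast
    ultimately show "y \<in> translate T a" unfolding translate_def by blast
  qed
  ultimately show ?thesis by (rule that)
qed

lemma path_affine_map:
  assumes tile: "self_affine_lattice_tile M m k T"
    and uv: "nb_succ M m k T u v"
  obtains g where "invertible_affine g" "g ` T \<subseteq> T" "g ` translate T v \<subseteq> translate T u"
proof -
  have "\<exists>g. invertible_affine g \<and> g ` T \<subseteq> T \<and> g ` translate T v \<subseteq> translate T u"
    using uv unfolding nb_succ_def
  proof (induction rule: rtrancl_induct)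
    case base
    show ?case by (intro exI[of _ id] conjI invertible_affine_id) auto
  next
    case (step b c)
    obtain g where g: "invertible_affine g" "g ` T \<subseteq> T" "g ` translate T b \<subseteq> translate T u"
      using step.IH by blast
    obtain f where f: "invertible_affine f" "f ` T \<subseteq> T" "f ` translate T c \<subseteq> translate T b"
      using edge_affine_map[OF tile step.hyps(2)] by blast
    have "(g \<circ> f) ` T \<subseteq> T" "(g \<circ> f) ` translate T c \<subseteq> translate T u"
      using g f by (fastforce simp: image_comp[symmetric])+
    thus ?case using invertible_affine_comp[OF g(1) f(1)] by blast
  qed
  thus ?thesis using that by blast
qed

lemma compact_Bset:
  assumes "compact T"
  shows "compact (Bset T w)"
proof -
  have "compact (translate T w)" unfolding translate_def
    by (rule compact_continuous_image[OF _ assms]) (intro continuous_intros)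
  thus ?thesis unfolding Bset_def using assms by (simp add: compact_Int)
qed

section \<open>Faces are transported by affine self-maps\<close>

text \<open>The key point is that
  \<open>g\<close> is open, so it maps the interior of \<open>T\<close> into the interior of \<open>T\<close>: a frontier point
  of \<open>T\<close> near \<open>g x\<close> must therefore come from \<open>T + v\<close>.\<close>
lemma face_transfer:
  assumes cT: "closed T" and u0: "u \<noteq> 0"
    and g: "invertible_affine g" "g ` T \<subseteq> T" "g ` translate T v \<subseteq> translate T u"
    and face: "is_face T v"
  shows "is_face T u"
proof -
  obtain x U where x: "x \<in> Bset T v" and U: "open U" "x \<in> U"
    and Ufr: "U \<inter> frontier T \<subseteq> Bset T v" and UT: "U \<subseteq> T \<union> translate T v"
    using face unfolding is_face_def by blast
  have "g ` interior T \<subseteq> T" using g(2) interior_subset by blast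
  hence int: "g ` interior T \<subseteq> interior T"
    using invertible_affine_open_map[OF g(1) open_interior] by (rule interior_maximal)
  have "g ` U \<inter> frontier T \<subseteq> Bset T u"
  proof
    fix y assume y: "y \<in> g ` U \<inter> frontier T"
    then obtain z where z: "z \<in> U" "y = g z" by blast
    have "y \<in> T" using y frontier_subset_closed[OF cT] by blast
    show "y \<in> Bset T u"
    proof (cases "z \<in> translate T v")
      case True thus ?thesis using g(3) z \<open>y \<in> T\<close> unfolding Bset_def by blast
    next
      case False
      have "z \<in> T" using UT z(1) False by blast
      moreover have "z \<notin> frontier T" using Ufr z(1) False unfolding Bset_def by blast
      ultimately have "z \<in> interior T" using cT by (simp add: frontier_def closure_closed)
      hence "y \<in> interior T" using int z(2) by blast
      thus ?thesis using y by (simp add: frontier_def)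
    qed
  qed
  moreover have "g x \<in> Bset T u" using x g unfolding Bset_def by blast
  moreover have "g ` U \<subseteq> T \<union> translate T u" using UT g by blast
  ultimately show ?thesis
    using u0 invertible_affine_open_map[OF g(1) U(1)] U(2) unfolding is_face_def by blast
qed

section \<open>Lipschitz images do not increase Hausdorff and box dimension\<close>

text \<open>The metric-space form of the library bound \<open>diameter_le\<close> (which is stated with norms).\<close>
lemma diameter_le_dist:
  fixes S :: "'a::metric_space set"
  assumes "S \<noteq> {} \<or> 0 \<le> d" and "\<And>x y. x \<in> S \<Longrightarrow> y \<in> S \<Longrightarrow> dist x y \<le> d"
  shows "diameter S \<le> d"
  using assms by (auto simp: diameter_def intro: cSUP_least)

lemma lipschitz_image_diameter:
  fixes f :: "'a::metric_space \<Rightarrow> 'b::metric_space"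
  assumes f: "C-lipschitz_on B f" and U: "bounded U"
  shows "bounded (f ` (U \<inter> B))" "diameter (f ` (U \<inter> B)) \<le> C * diameter U"
proof -
  have C: "C \<ge> 0" using f by (rule lipschitz_on_nonneg)
  have close: "dist (f x) (f y) \<le> C * diameter U" if "x \<in> U \<inter> B" "y \<in> U \<inter> B" for x y
  proof -
    have "dist (f x) (f y) \<le> C * dist x y" using f that by (auto intro: lipschitz_onD)
    also have "\<dots> \<le> C * diameter U"
      using that C diameter_bounded_bound[OF U] by (auto intro: mult_left_mono)
    finally show ?thesis .
  qed
  show "bounded (f ` (U \<inter> B))"
  proof (cases "U \<inter> B = {}")
    case False
    then obtain x where "x \<in> U \<inter> B" by blast
    thus ?thesis using close unfolding bounded_def by blast
  qed simp
  show "diameter (f ` (U \<inter> B)) \<le> C * diameter U"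
    using close C diameter_ge_0[OF U] by (intro diameter_le_dist) auto
qed

lemma hausdorff_pre_lipschitz_cover:
  fixes f :: "'a::metric_space \<Rightarrow> 'b::metric_space"
  assumes f: "C-lipschitz_on B f" and C: "C > 0" and AB: "A \<subseteq> f ` B" and s: "s \<ge> 0"
    and U: "B \<subseteq> (\<Union>i. U i)" "\<And>i. bounded (U i) \<and> diameter (U i) \<le> \<delta>"
  shows "hausdorff_pre s (C * \<delta>) A \<le> ennreal (C powr s) * (\<Sum>i. ennreal (diameter (U i) powr s))"
proof -
  define V where "V i = f ` (U i \<inter> B)" for i
  have bV: "bounded (V i)" and dV: "diameter (V i) \<le> C * diameter (U i)" for i
    using lipschitz_image_diameter[OF f] U(2) by (simp_all add: V_def)
  have cover: "A \<subseteq> (\<Union>i. V i)"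
  proof
    fix x assume "x \<in> A"
    then obtain y where y: "y \<in> B" "x = f y" using AB by blast
    then obtain i where "y \<in> U i" using U(1) by blast
    thus "x \<in> (\<Union>i. V i)" using y unfolding V_def by blast
  qed
  have small: "\<forall>i. bounded (V i) \<and> diameter (V i) \<le> C * \<delta>"
  proof
    fix i
    have "C * diameter (U i) \<le> C * \<delta>" using U(2) C by (simp add: mult_left_mono)
    thus "bounded (V i) \<and> diameter (V i) \<le> C * \<delta>" using bV dV[of i] by simp
  qed
  have "hausdorff_pre s (C * \<delta>) A \<le> (\<Sum>i. ennreal (diameter (V i) powr s))"
    unfolding hausdorff_pre_def by (rule INF_lower) (simp only: mem_Collect_eq cover small simp_thms)
  also have "\<dots> \<le> (\<Sum>i. ennreal (C powr s) * ennreal (diameter (U i) powr s))"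
  proof (rule suminf_le[OF _ summableI summableI])
    fix i
    have "diameter (V i) powr s \<le> (C * diameter (U i)) powr s"
      using powr_mono2[OF s diameter_ge_0[OF bV] dV] .
    also have "\<dots> = C powr s * diameter (U i) powr s"
      using C diameter_ge_0[of "U i"] U(2) by (simp add: powr_mult)
    finally show "ennreal (diameter (V i) powr s) \<le> ennreal (C powr s) * ennreal (diameter (U i) powr s)"
      by (simp add: ennreal_mult[symmetric] ennreal_leI)
  qed
  also have "\<dots> = ennreal (C powr s) * (\<Sum>i. ennreal (diameter (U i) powr s))" by simp
  finally show ?thesis .
qed

lemma hausdorff_pre_lipschitz_null:
  fixes f :: "'a::metric_space \<Rightarrow> 'b::metric_space"
  assumes f: "C-lipschitz_on B f" and C: "C > 0" and AB: "A \<subseteq> f ` B" and s: "s \<ge> 0"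
    and null: "hausdorff_pre s \<delta> B = 0"
  shows "hausdorff_pre s (C * \<delta>) A = 0"
proof -
  have "hausdorff_pre s (C * \<delta>) A \<le> 0 + ennreal e" if e: "e > 0" for e
  proof -
    have Cs: "C powr s > 0" using C by simp
    hence "hausdorff_pre s \<delta> B < ennreal (e / C powr s)" using e null by simp
    then obtain U where U: "B \<subseteq> (\<Union>i. U i)" "\<And>i. bounded (U i) \<and> diameter (U i) \<le> \<delta>"
      and small: "(\<Sum>i. ennreal (diameter (U i) powr s)) < ennreal (e / C powr s)"
      unfolding hausdorff_pre_def by (auto simp: INF_less_iff)
    have "hausdorff_pre s (C * \<delta>) A \<le> ennreal (C powr s) * (\<Sum>i. ennreal (diameter (U i) powr s))"
      by (rule hausdorff_pre_lipschitz_cover[OF f C AB s U])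
    also have "\<dots> \<le> ennreal (C powr s) * ennreal (e / C powr s)"
      using small by (intro mult_left_mono) auto
    also have "\<dots> = ennreal e" using Cs e by (simp add: ennreal_mult[symmetric])
    finally show ?thesis by simp
  qed
  hence "hausdorff_pre s (C * \<delta>) A \<le> 0" by (rule ennreal_le_epsilon)
  thus ?thesis by simp
qed

text \<open>Lipschitz images do not increase Hausdorff dimension: every exponent \<open>s\<close> at which
  \<open>B\<close> has \<open>s\<close>-dimensional Hausdorff measure 0 is one at which \<open>A\<close> has.  The Lipschitz
  constant may be enlarged to make it positive.\<close>
lemma hausdorff_dim_lipschitz_image:
  fixes f :: "'a::metric_space \<Rightarrow> 'b::metric_space"
  assumes f: "C-lipschitz_on B f" and AB: "A \<subseteq> f ` B"
  shows "hausdorff_dim A \<le> hausdorff_dim B"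
  unfolding hausdorff_dim_def
proof (rule Inf_superset_mono, safe)
  define C' where "C' = max 1 C"
  have f': "C'-lipschitz_on B f" and C': "C' > 0"
    using lipschitz_on_le[OF f] by (simp_all add: C'_def)
  fix s assume s: "0 \<le> s" and null: "hausdorff_measure s B = 0"
  have "hausdorff_pre s d A = 0" if d: "d > 0" for d
  proof -
    have "hausdorff_pre s (d / C') B \<le> hausdorff_measure s B"
      unfolding hausdorff_measure_def using d C' by (intro SUP_upper) auto
    hence "hausdorff_pre s (C' * (d / C')) A = 0"
      using null by (intro hausdorff_pre_lipschitz_null[OF f' C' AB s]) simp
    thus ?thesis using C' by simp
  qed
  hence "hausdorff_measure s A = 0" unfolding hausdorff_measure_def by simp
  thus "\<exists>s'. ereal s = ereal s' \<and> 0 \<le> s' \<and> hausdorff_measure s' A = 0" using s by blast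
qed

text \<open>A compact set admits, for every \<open>\<delta> > 0\<close>, a finite cover by sets of diameter \<open>\<le> \<delta>\<close>
  (balls of radius \<open>\<delta>/2\<close> from total boundedness), so its cover numbers are attained.\<close>
lemma compact_finite_cover:
  fixes B :: "'a::metric_space set"
  assumes "compact B" "\<delta> > 0"
  shows "\<exists>F. finite F \<and> B \<subseteq> \<Union>F \<and> (\<forall>U\<in>F. bounded U \<and> diameter U \<le> \<delta>)"
proof -
  obtain K where K: "finite K" "B \<subseteq> (\<Union>x\<in>K. ball x (\<delta>/2))"
    using assms compact_eq_totally_bounded[of B] by (meson half_gt_zero)
  have "diameter (cball x (\<delta>/2)) \<le> \<delta>" for x :: 'a
  proof (rule diameter_le_dist)
    fix y z assume "y \<in> cball x (\<delta>/2)" "z \<in> cball x (\<delta>/2)"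
    thus "dist y z \<le> \<delta>" using dist_triangle[of y z x] by (simp add: dist_commute)
  qed (use assms(2) in simp)
  moreover have "B \<subseteq> \<Union>((\<lambda>x. cball x (\<delta>/2)) ` K)"
    using K(2) ball_subset_cball by blast
  ultimately show ?thesis using K(1) by (intro exI[of _ "(\<lambda>x. cball x (\<delta>/2)) ` K"]) simp
qed

text \<open>A minimal \<open>\<delta>\<close>-cover of \<open>B\<close> is carried by \<open>f\<close> to a \<open>C\<delta>\<close>-cover of \<open>A \<subseteq> f(B)\<close>.\<close>
lemma cover_number_lipschitz_image:
  fixes f :: "'a::metric_space \<Rightarrow> 'b::metric_space"
  assumes f: "C-lipschitz_on B f" and AB: "A \<subseteq> f ` B" and B: "compact B" and \<delta>: "\<delta> > 0"
  shows "cover_number (C * \<delta>) A \<le> cover_number \<delta> B"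
proof -
  let ?S = "{card F | F. finite F \<and> B \<subseteq> \<Union>F \<and> (\<forall>U\<in>F. bounded U \<and> diameter U \<le> \<delta>)}"
  have "?S \<noteq> {}" using compact_finite_cover[OF B \<delta>] by blast
  hence "Inf ?S \<in> ?S" by (rule Inf_nat_def1)
  then obtain F where F: "finite F" "B \<subseteq> \<Union>F" "\<forall>U\<in>F. bounded U \<and> diameter U \<le> \<delta>"
    and card: "card F = cover_number \<delta> B" unfolding cover_number_def by auto
  let ?G = "(\<lambda>U. f ` (U \<inter> B)) ` F"
  have "A \<subseteq> \<Union>?G"
  proof
    fix x assume "x \<in> A"
    then obtain y where y: "y \<in> B" "x = f y" using AB by blast
    then obtain U where "U \<in> F" "y \<in> U" using F(2) by blast
    thus "x \<in> \<Union>?G" using y by blast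
  qed
  moreover have "bounded V \<and> diameter V \<le> C * \<delta>" if "V \<in> ?G" for V
  proof -
    obtain U where U: "U \<in> F" "V = f ` (U \<inter> B)" using \<open>V \<in> ?G\<close> by blast
    have "diameter V \<le> C * diameter U" using lipschitz_image_diameter(2)[OF f] F(3) U by simp
    also have "\<dots> \<le> C * \<delta>"
      using F(3) U(1) lipschitz_on_nonneg[OF f] by (simp add: mult_left_mono)
    finally show ?thesis using lipschitz_image_diameter(1)[OF f] F(3) U by simp
  qed
  ultimately have "cover_number (C * \<delta>) A \<le> card ?G"
    unfolding cover_number_def using F(1) by (intro cInf_lower) auto
  also have "\<dots> \<le> card F" using F(1) by (rule card_image_le)
  finally show ?thesis using card by simp
qed

text \<open>For \<open>C \<ge> 1\<close> and any \<open>e > 0\<close>, the rescaling \<open>\<delta> \<mapsto> \<delta>/C\<close> changes \<open>-ln \<delta>\<close> by at most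
  the factor \<open>1 + e\<close> near \<open>0\<close>: this is why box dimensions ignore Lipschitz constants.\<close>
lemma log_rescale_eventually:
  fixes C e :: real
  assumes C: "C \<ge> 1" and e: "e > 0"
  shows "eventually (\<lambda>d. 0 < - ln d \<and> - ln ((1/C) * d) \<le> (1 + e) * (- ln d)) (at_right 0)"
proof -
  define r where "r = min 1 (exp (- ln C / e))"
  have "0 < - ln d \<and> - ln ((1/C) * d) \<le> (1 + e) * (- ln d)" if d: "0 < d" "d < r" for d
  proof -
    have "d < exp (- ln C / e)" "d < 1" using d by (auto simp: r_def)
    hence "ln d < - ln C / e" using d(1) by (metis ln_exp ln_less_cancel_iff exp_gt_zero)
    hence "ln C \<le> e * (- ln d)" using e by (simp add: field_simps)
    moreover have "- ln ((1/C) * d) = - ln d + ln C" using d C by (simp add: ln_mult ln_div)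
    moreover have "(1 + e) * (- ln d) = - ln d + e * (- ln d)" by (simp add: algebra_simps)
    moreover have "0 < - ln d" using \<open>d < 1\<close> d(1) by simp
    ultimately show ?thesis by linarith
  qed
  moreover have "r > 0" by (simp add: r_def)
  ultimately show ?thesis by (auto simp: eventually_at_right_field)
qed

lemma ereal_le_by_factor:
  fixes X L :: ereal
  assumes L0: "L \<ge> 0" and H: "\<And>e. e > 0 \<Longrightarrow> X \<le> L * ereal (1 + e)"
  shows "X \<le> L"
proof (cases L)
  case (real l)
  show ?thesis
  proof (rule ereal_le_epsilon2)
    fix e :: real assume e: "e > 0"
    have l: "l \<ge> 0" using L0 real by simp
    have "X \<le> ereal (l * (1 + e / (l + 1)))" using H[of "e / (l + 1)"] e l real by simp
    also have "l * (1 + e / (l + 1)) \<le> l + e"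
      using l e by (simp add: field_simps)
    finally show "X \<le> L + ereal e" using real by simp
  qed
qed (use L0 in auto)

lemma log_ratio_rescaled_bound:
  fixes a b :: "real \<Rightarrow> real"
  assumes C: "C \<ge> 1" and ab: "\<And>d. d > 0 \<Longrightarrow> a d \<le> b (d / C)" and b0: "\<And>d. d > 0 \<Longrightarrow> b d \<ge> 0"
    and e: "e > 0"
  shows "eventually (\<lambda>d. a d / - ln d \<le> b ((1/C) * d) / - ln ((1/C) * d) * (1 + e)
                        \<and> 0 \<le> b ((1/C) * d) / - ln ((1/C) * d)) (at_right 0)"
  using log_rescale_eventually[OF C e] eventually_at_right_less[of 0]
proof eventually_elim
  case (elim d)
  define t where "t = (1/C) * d"
  have lnd: "0 < - ln d" and lnt: "- ln t \<le> (1 + e) * (- ln d)" using elim by (simp_all add: t_def)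
  have "t > 0" using elim C by (simp add: t_def)
  hence bt: "b t \<ge> 0" by (rule b0)
  have "0 < - ln t" using lnd C elim by (simp add: t_def ln_mult ln_div)
  have "a d / - ln d \<le> b t / - ln d"
    using ab[of d] elim lnd by (intro divide_right_mono) (simp_all add: t_def field_simps)
  also have "\<dots> \<le> b t / - ln t * (1 + e)"
  proof -
    have "b t * (- ln t) \<le> b t * ((1 + e) * (- ln d))" using lnt bt by (rule mult_left_mono)
    thus ?thesis using lnd \<open>0 < - ln t\<close> by (simp add: field_simps)
  qed
  finally show ?case using divide_nonneg_pos[OF bt \<open>0 < - ln t\<close>] by (simp add: t_def)
qed

text \<open>Hence the upper and lower limits of \<open>a(\<delta>)/(-ln \<delta>)\<close> at \<open>0\<^sup>+\<close> are at most those of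
  \<open>b(\<delta>)/(-ln \<delta>)\<close>; the substitution \<open>\<delta> = t/C\<close> does not change the latter limits.\<close>
lemma log_ratio_limits_mono:
  fixes a b :: "real \<Rightarrow> real"
  assumes C: "C \<ge> 1" and ab: "\<And>d. d > 0 \<Longrightarrow> a d \<le> b (d / C)" and b0: "\<And>d. d > 0 \<Longrightarrow> b d \<ge> 0"
  shows "Limsup (at_right 0) (\<lambda>d. ereal (a d / - ln d)) \<le> Limsup (at_right 0) (\<lambda>d. ereal (b d / - ln d))"
    and "Liminf (at_right 0) (\<lambda>d. ereal (a d / - ln d)) \<le> Liminf (at_right 0) (\<lambda>d. ereal (b d / - ln d))"
proof -
  define \<psi> where "\<psi> = (\<lambda>d. ereal (b ((1/C) * d) / - ln ((1/C) * d)))"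
  have Cp: "1/C > 0" using C by simp
  have inj: "inj ((*) (1/C) :: real \<Rightarrow> real)" using Cp by (auto intro: injI)
  have fm: "filtermap ((*) (1/C)) (at_right (0::real)) = at_right 0"
    using filtermap_times_pos_at_right[OF Cp, of 0] by simp
  have sup_eq: "Limsup (at_right 0) (\<lambda>d. ereal (b d / - ln d)) = Limsup (at_right 0) \<psi>"
    using Limsup_filtermap_eq[OF inj, of "at_right 0" "\<lambda>d. ereal (b d / - ln d)"] fm
    by (simp add: \<psi>_def comp_def)
  have inf_eq: "Liminf (at_right 0) (\<lambda>d. ereal (b d / - ln d)) = Liminf (at_right 0) \<psi>"
    using Liminf_filtermap_eq[OF inj, of "at_right 0" "\<lambda>d. ereal (b d / - ln d)"] fm
    by (simp add: \<psi>_def comp_def)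
  have bound: "eventually (\<lambda>d. ereal (a d / - ln d) \<le> \<psi> d * ereal (1 + e)) (at_right 0)"
    and nonneg: "eventually (\<lambda>d. 0 \<le> \<psi> d) (at_right 0)" if e: "e > 0" for e
    using log_ratio_rescaled_bound[where a=a and b=b, OF C ab b0 e] by (auto elim: eventually_mono simp: \<psi>_def)
  have inf0: "0 \<le> Liminf (at_right 0) \<psi>" using nonneg[of 1] by (simp add: Liminf_bounded)
  hence sup0: "0 \<le> Limsup (at_right 0) \<psi>"
    using Liminf_le_Limsup[of "at_right (0::real)" \<psi>] by simp
  show "Limsup (at_right 0) (\<lambda>d. ereal (a d / - ln d)) \<le> Limsup (at_right 0) (\<lambda>d. ereal (b d / - ln d))"
    unfolding sup_eq
  proof (rule ereal_le_by_factor[OF sup0])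
    fix e :: real assume e: "e > 0"
    have "Limsup (at_right 0) (\<lambda>d. ereal (a d / - ln d)) \<le> Limsup (at_right 0) (\<lambda>d. \<psi> d * ereal (1 + e))"
      using bound[OF e] by (rule Limsup_mono)
    also have "\<dots> = Limsup (at_right 0) \<psi> * ereal (1 + e)"
      using e by (intro Limsup_ereal_mult_right) auto
    finally show "Limsup (at_right 0) (\<lambda>d. ereal (a d / - ln d)) \<le> Limsup (at_right 0) \<psi> * ereal (1 + e)" .
  qed
  show "Liminf (at_right 0) (\<lambda>d. ereal (a d / - ln d)) \<le> Liminf (at_right 0) (\<lambda>d. ereal (b d / - ln d))"
    unfolding inf_eq
  proof (rule ereal_le_by_factor[OF inf0])
    fix e :: real assume e: "e > 0"
    have "Liminf (at_right 0) (\<lambda>d. ereal (a d / - ln d)) \<le> Liminf (at_right 0) (\<lambda>d. \<psi> d * ereal (1 + e))"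
      using bound[OF e] by (rule Liminf_mono)
    also have "\<dots> = Liminf (at_right 0) \<psi> * ereal (1 + e)"
      using e by (intro Liminf_ereal_mult_right) auto
    finally show "Liminf (at_right 0) (\<lambda>d. ereal (a d / - ln d)) \<le> Liminf (at_right 0) \<psi> * ereal (1 + e)" .
  qed
qed

text \<open>Lipschitz images of compact sets do not increase upper or lower box dimension:
  \<open>N\<^sub>\<delta>(A) \<le> N\<^sub>\<delta>\<^sub>/\<^sub>C(B)\<close>, and the rescaling is invisible in the logarithmic limits.\<close>
lemma box_dim_lipschitz_image:
  fixes f :: "'a::metric_space \<Rightarrow> 'b::metric_space"
  assumes f: "C-lipschitz_on B f" and AB: "A \<subseteq> f ` B" and B: "compact B"
  shows "upper_box_dim A \<le> upper_box_dim B" "lower_box_dim A \<le> lower_box_dim B"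
proof -
  define C' where "C' = max 1 C"
  have f': "C'-lipschitz_on B f" and C': "C' \<ge> 1"
    using lipschitz_on_le[OF f] by (simp_all add: C'_def)
  define a where "a d = ln (real (cover_number d A))" for d
  define b where "b d = ln (real (cover_number d B))" for d
  have b0: "b d \<ge> 0" for d
    unfolding b_def by (cases "cover_number d B = 0") auto
  have ab: "a d \<le> b (d / C')" if d: "d > 0" for d
  proof (cases "cover_number d A = 0")
    case False
    have "cover_number (C' * (d / C')) A \<le> cover_number (d / C') B"
      using d C' by (intro cover_number_lipschitz_image[OF f' AB B]) simp
    thus ?thesis using False C' unfolding a_def b_def by simp
  qed (use b0 in \<open>simp add: a_def\<close>)
  show "upper_box_dim A \<le> upper_box_dim B" "lower_box_dim A \<le> lower_box_dim B"
    using log_ratio_limits_mono[where a=a and b=b, OF C' ab b0]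
    unfolding upper_box_dim_def lower_box_dim_def a_def b_def by simp_all
qed

section \<open>Topological embeddings do not increase covering dimension\<close>

lemma covdim_leE:
  assumes "covdim_le S n" "finite \<U>" "\<forall>U\<in>\<U>. openin (top_of_set S) U" "S \<subseteq> \<Union>\<U>"
  obtains \<V> where "finite \<V>" "\<forall>V\<in>\<V>. openin (top_of_set S) V" "S \<subseteq> \<Union>\<V>"
    "\<forall>V\<in>\<V>. \<exists>U\<in>\<U>. V \<subseteq> U" "\<forall>x\<in>S. card {V\<in>\<V>. x \<in> V} \<le> nat (n + 1)"
proof -
  have "\<exists>\<V>. finite \<V> \<and> (\<forall>V\<in>\<V>. openin (top_of_set S) V) \<and> S \<subseteq> \<Union>\<V> \<and>
          (\<forall>V\<in>\<V>. \<exists>U\<in>\<U>. V \<subseteq> U) \<and> (\<forall>x\<in>S. card {V\<in>\<V>. x \<in> V} \<le> nat (n + 1))"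
    using assms(1)[unfolded covdim_le_def, rule_format, OF conjI[OF assms(2) conjI[OF assms(3,4)]]] .
  thus ?thesis using that by blast
qed

lemma card_members_image_le:
  assumes "finite \<V>'" "\<V> \<subseteq> \<phi> ` \<V>'" "\<And>V. V \<in> \<V>' \<Longrightarrow> x \<in> \<phi> V \<Longrightarrow> y \<in> V"
  shows "card {W\<in>\<V>. x \<in> W} \<le> card {V\<in>\<V>'. y \<in> V}"
proof -
  have "{W\<in>\<V>. x \<in> W} \<subseteq> \<phi> ` {V\<in>\<V>'. y \<in> V}" using assms(2,3) by blast
  hence "card {W\<in>\<V>. x \<in> W} \<le> card (\<phi> ` {V\<in>\<V>'. y \<in> V})"
    using assms(1) by (intro card_mono) auto
  also have "\<dots> \<le> card {V\<in>\<V>'. y \<in> V}" using assms(1) by (intro card_image_le) auto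
  finally show ?thesis .
qed

text \<open>Covering dimension is inherited by closed subspaces: an open cover of the subspace
  \<open>S\<close> extends, by adding \<open>S' - S\<close>, to an open cover of \<open>S'\<close>, and a refinement of the latter
  restricts back to \<open>S\<close> without increasing the order.\<close>
lemma covdim_le_closedin:
  assumes S: "closedin (top_of_set S') S" and cov: "covdim_le S' n"
  shows "covdim_le S n"
  unfolding covdim_le_def
proof (intro allI impI)
  fix \<U> :: "'a set set"
  assume U: "finite \<U> \<and> (\<forall>U\<in>\<U>. openin (top_of_set S) U) \<and> S \<subseteq> \<Union>\<U>"
  have SS': "S \<subseteq> S'" using S closedin_imp_subset by blast
  have "\<forall>U\<in>\<U>. \<exists>Ob. open Ob \<and> U = S \<inter> Ob" using U by (simp add: openin_open)
  then obtain W where W: "\<And>U. U \<in> \<U> \<Longrightarrow> open (W U) \<and> U = S \<inter> W U" by metis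
  define \<U>' where "\<U>' = insert (S' - S) ((\<lambda>U. S' \<inter> W U) ` \<U>)"
  have "finite \<U>'" using U by (simp add: \<U>'_def)
  moreover have "\<forall>U'\<in>\<U>'. openin (top_of_set S') U'"
  proof -
    have "openin (top_of_set S') (S' - S)" using S by (simp add: closedin_def)
    moreover have "openin (top_of_set S') (S' \<inter> W U)" if "U \<in> \<U>" for U
      using W[OF that] by (simp add: openin_open_Int)
    ultimately show ?thesis unfolding \<U>'_def by blast
  qed
  moreover have "S' \<subseteq> \<Union>\<U>'"
  proof
    fix y assume "y \<in> S'"
    show "y \<in> \<Union>\<U>'"
    proof (cases "y \<in> S")
      case True
      then obtain U where "U \<in> \<U>" "y \<in> U" using U by blast
      thus ?thesis using W \<open>y \<in> S'\<close> unfolding \<U>'_def by blast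
    qed (use \<open>y \<in> S'\<close> in \<open>auto simp: \<U>'_def\<close>)
  qed
  ultimately obtain \<V>' where \<V>': "finite \<V>'" "\<forall>V\<in>\<V>'. openin (top_of_set S') V" "S' \<subseteq> \<Union>\<V>'"
    "\<forall>V\<in>\<V>'. \<exists>U'\<in>\<U>'. V \<subseteq> U'" "\<forall>x\<in>S'. card {V\<in>\<V>'. x \<in> V} \<le> nat (n + 1)"
    by (rule covdim_leE[OF cov])
  define \<V> where "\<V> = (\<lambda>V. V \<inter> S) ` {V\<in>\<V>'. V \<inter> S \<noteq> {}}"
  have restrict_open: "openin (top_of_set S) (V \<inter> S)" if V: "V \<in> \<V>'" for V
  proof -
    obtain Ob where "open Ob" "V = S' \<inter> Ob" using \<V>'(2) V by (meson openin_open)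
    hence "V \<inter> S = S \<inter> Ob" using SS' by blast
    thus ?thesis using \<open>open Ob\<close> by (simp add: openin_open_Int)
  qed
  have fin: "finite \<V>" using \<V>'(1) by (simp add: \<V>_def)
  have op: "\<forall>V\<in>\<V>. openin (top_of_set S) V" using restrict_open unfolding \<V>_def by blast
  have cv: "S \<subseteq> \<Union>\<V>" using \<V>'(3) SS' unfolding \<V>_def by blast
  have ref: "\<forall>V\<in>\<V>. \<exists>U\<in>\<U>. V \<subseteq> U"
  proof
    fix V assume "V \<in> \<V>"
    then obtain V' where V': "V' \<in> \<V>'" "V' \<inter> S \<noteq> {}" "V = V' \<inter> S" unfolding \<V>_def by blast
    then obtain U' where "U' \<in> \<U>'" "V' \<subseteq> U'" using \<V>'(4) by blast
    moreover have "\<not> V' \<subseteq> S' - S" using V'(2) by blast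
    ultimately obtain U where "U \<in> \<U>" "V' \<subseteq> S' \<inter> W U" unfolding \<U>'_def by blast
    thus "\<exists>U\<in>\<U>. V \<subseteq> U" using W V'(3) by blast
  qed
  have mult: "\<forall>x\<in>S. card {V\<in>\<V>. x \<in> V} \<le> nat (n + 1)"
  proof
    fix x assume x: "x \<in> S"
    have "card {V\<in>\<V>. x \<in> V} \<le> card {V\<in>\<V>'. x \<in> V}"
      using \<V>'(1) by (rule card_members_image_le[where \<phi>="\<lambda>V. V \<inter> S"]) (auto simp: \<V>_def)
    also have "\<dots> \<le> nat (n + 1)" using \<V>'(5) x SS' by blast
    finally show "card {V\<in>\<V>. x \<in> V} \<le> nat (n + 1)" .
  qed
  show "\<exists>\<V>. finite \<V> \<and> (\<forall>V\<in>\<V>. openin (top_of_set S) V) \<and> S \<subseteq> \<Union>\<V> \<and>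
             (\<forall>V\<in>\<V>. \<exists>U\<in>\<U>. V \<subseteq> U) \<and> (\<forall>x\<in>S. card {V\<in>\<V>. x \<in> V} \<le> nat (n + 1))"
    by (intro exI[of _ \<V>] conjI fin op cv ref mult)
qed

text \<open>Covering dimension is a topological invariant: covers are transported along a
  homeomorphism and refinements pulled back.\<close>
lemma covdim_le_homeomorphism:
  assumes hom: "homeomorphism S S' g g'" and cov: "covdim_le S' n"
  shows "covdim_le S n"
  unfolding covdim_le_def
proof (intro allI impI)
  fix \<U> :: "'a set set"
  assume U: "finite \<U> \<and> (\<forall>U\<in>\<U>. openin (top_of_set S) U) \<and> S \<subseteq> \<Union>\<U>"
  have g: "g ` S = S'" "g' ` S' = S" "\<And>x. x \<in> S \<Longrightarrow> g' (g x) = x" "\<And>y. y \<in> S' \<Longrightarrow> g (g' y) = y"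
    using hom unfolding homeomorphism_def by auto
  have "finite ((`) g ` \<U>)" using U by simp
  moreover have "\<forall>U'\<in>(`) g ` \<U>. openin (top_of_set S') U'"
    using U homeomorphism_imp_open_map[OF hom] by blast
  moreover have "S' \<subseteq> \<Union>((`) g ` \<U>)" using U g(1) by blast
  ultimately obtain \<V>' where \<V>': "finite \<V>'" "\<forall>V\<in>\<V>'. openin (top_of_set S') V" "S' \<subseteq> \<Union>\<V>'"
    "\<forall>V\<in>\<V>'. \<exists>U'\<in>(`) g ` \<U>. V \<subseteq> U'" "\<forall>y\<in>S'. card {V\<in>\<V>'. y \<in> V} \<le> nat (n + 1)"
    by (rule covdim_leE[OF cov])
  define \<V> where "\<V> = (`) g' ` \<V>'"
  have sub: "V \<subseteq> S'" if "V \<in> \<V>'" for V using \<V>'(2) that openin_imp_subset by blast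
  have fin: "finite \<V>" using \<V>'(1) by (simp add: \<V>_def)
  have op: "\<forall>V\<in>\<V>. openin (top_of_set S) V"
    using \<V>'(2) homeomorphism_imp_open_map[OF homeomorphism_symD[OF hom]] unfolding \<V>_def by blast
  have cv: "S \<subseteq> \<Union>\<V>"
  proof
    fix x assume "x \<in> S"
    then obtain V where "V \<in> \<V>'" "g x \<in> V" using \<V>'(3) g(1) by blast
    thus "x \<in> \<Union>\<V>" using g(3) \<open>x \<in> S\<close> unfolding \<V>_def by (metis UnionI image_eqI)
  qed
  have ref: "\<forall>V\<in>\<V>. \<exists>U\<in>\<U>. V \<subseteq> U"
  proof
    fix V assume "V \<in> \<V>"
    then obtain V' U where "V' \<in> \<V>'" "U \<in> \<U>" "V' \<subseteq> g ` U" "V = g' ` V'"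
      using \<V>'(4) unfolding \<V>_def by blast
    moreover have "g' ` g ` U = U"
    proof -
      have "U \<subseteq> S" using U \<open>U \<in> \<U>\<close> openin_imp_subset by blast
      hence "\<And>x. x \<in> U \<Longrightarrow> g' (g x) = x" using g(3) by blast
      thus ?thesis by (simp add: image_image)
    qed
    ultimately show "\<exists>U\<in>\<U>. V \<subseteq> U" by blast
  qed
  have mult: "\<forall>x\<in>S. card {V\<in>\<V>. x \<in> V} \<le> nat (n + 1)"
  proof
    fix x assume x: "x \<in> S"
    have member: "g x \<in> V" if V: "V \<in> \<V>'" "x \<in> g' ` V" for V
    proof -
      obtain y where "y \<in> V" "x = g' y" using V(2) by blast
      thus ?thesis using g(4) sub[OF V(1)] by auto
    qed
    have "card {V\<in>\<V>. x \<in> V} \<le> card {V\<in>\<V>'. g x \<in> V}"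
      using \<V>'(1) by (rule card_members_image_le[where \<phi>="(`) g'"]) (auto simp: \<V>_def member)
    also have "\<dots> \<le> nat (n + 1)" using \<V>'(5) x g(1) by blast
    finally show "card {V\<in>\<V>. x \<in> V} \<le> nat (n + 1)" .
  qed
  show "\<exists>\<V>. finite \<V> \<and> (\<forall>V\<in>\<V>. openin (top_of_set S) V) \<and> S \<subseteq> \<Union>\<V> \<and>
             (\<forall>V\<in>\<V>. \<exists>U\<in>\<U>. V \<subseteq> U) \<and> (\<forall>x\<in>S. card {V\<in>\<V>. x \<in> V} \<le> nat (n + 1))"
    by (intro exI[of _ \<V>] conjI fin op cv ref mult)
qed

text \<open>A continuous injection of a compact space is a homeomorphism onto its (closed) image,
  so the topological dimension can only go up along it.\<close>
lemma topological_dim_embedding: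
  fixes g :: "'a::metric_space \<Rightarrow> 'b::metric_space"
  assumes S: "compact S" and gc: "continuous_on S g" and gi: "inj_on g S" and sub: "g ` S \<subseteq> S'"
  shows "topological_dim S \<le> topological_dim S'"
  unfolding topological_dim_def
proof (rule Inf_superset_mono, safe)
  fix n assume n: "n \<ge> -1" and cov: "covdim_le S' n"
  obtain g' where hom: "homeomorphism S (g ` S) g g'"
    using homeomorphism_compact[OF S gc refl gi] by blast
  have "closed (g ` S)" using compact_continuous_image[OF gc S] by (rule compact_imp_closed)
  hence "closedin (top_of_set S') (g ` S)" by (rule closed_subset[OF sub])
  hence "covdim_le S n" using covdim_le_homeomorphism[OF hom] covdim_le_closedin cov by blast
  thus "\<exists>n'. ereal (real_of_int n) = ereal (real_of_int n') \<and> n' \<ge> -1 \<and> covdim_le S n'"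
    using n by blast
qed

theorem proposition8p1:
  fixes M :: "real^'n^'n" and m :: nat and k :: "nat \<Rightarrow> real^'n"
    and T :: "(real^'n) set" and u v :: "real^'n"
  assumes tile: "self_affine_lattice_tile M m k T"
    and u: "u \<in> nb_vertices T - {0}" and v: "v \<in> nb_vertices T - {0}"
    and uv: "nb_succ M m k T u v"
  shows "topological_dim (Bset T u) \<ge> topological_dim (Bset T v)
       \<and> hausdorff_dim (Bset T u) \<ge> hausdorff_dim (Bset T v)
       \<and> upper_box_dim (Bset T u) \<ge> upper_box_dim (Bset T v)
       \<and> lower_box_dim (Bset T u) \<ge> lower_box_dim (Bset T v)
       \<and> (is_face T v \<longrightarrow> is_face T u)"
proof -
  note T = self_affine_lattice_tileD(2)[OF tile]
  obtain g where g: "invertible_affine g" "g ` T \<subseteq> T" "g ` translate T v \<subseteq> translate T u"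
    by (rule path_affine_map[OF tile uv])
  obtain h where h: "invertible_affine h" "\<And>x. h (g x) = x" "\<And>y. g (h y) = y"
    using invertible_affine_inverse[OF g(1)] by blast
  obtain C where "C-lipschitz_on UNIV h" by (rule invertible_affine_lipschitz[OF h(1)])
  hence hC: "C-lipschitz_on (Bset T u) h" by (rule lipschitz_on_subset) simp
  have gB: "g ` Bset T v \<subseteq> Bset T u" using g(2,3) unfolding Bset_def by blast
  have hB: "Bset T v \<subseteq> h ` Bset T u"
  proof
    fix x assume "x \<in> Bset T v"
    with h(2)[of x, symmetric] gB show "x \<in> h ` Bset T u" by blast
  qed
  have "topological_dim (Bset T v) \<le> topological_dim (Bset T u)"
    using h(2) by (intro topological_dim_embedding[OF compact_Bset[OF T] _ _ gB]
        invertible_affine_continuous[OF g(1)] inj_on_inverseI)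
  moreover have "hausdorff_dim (Bset T v) \<le> hausdorff_dim (Bset T u)"
    by (rule hausdorff_dim_lipschitz_image[OF hC hB])
  moreover note box_dim_lipschitz_image[OF hC hB compact_Bset[OF T]]
  moreover have "is_face T v \<longrightarrow> is_face T u"
    using face_transfer[OF compact_imp_closed[OF T] _ g] u by blast
  ultimately show ?thesis by simp
qed

end
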